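(* Let $M=(S,\mathrm{Act},P)$ be an MDP, $T\subseteq S$, $\mathrm{rew}\colon S\to\mathbb{R}_{\ge0}$. Define $\tilde E^{\max}\colon[0,\infty]^S\to[0,\infty]^S$ by $\tilde E^{\max}(x)(s)=E^{\max}(x)(s)$ if $\Pr^{\min}_s(\Diamond T)>0$ and $\tilde E^{\max}(x)(s)=\infty$ if $\Pr^{\min}_s(\Diamond T)=0$. Then for all $s\in S$, $(\mathrm{lfp}\,\tilde E^{\max})(s)=\mathbb{E}^{\max}_s(\Diamond T)$.
   Context: An MDP is a tuple $M=(S,\mathrm{Act},P)$ with $S$ finite, $\mathrm{Act}$ finite, $P\colon S\times\mathrm{Act}\times S\to[0,1]$ with $\sum_{s'}P(s,a,s')\in\{0,1\}$; $\mathrm{Act}(s)=\{a\mid\sum_{s'}P(s,a,s')=1\}$ is nonempty for all $s$; $\mathrm{Post}(s,a)=\{s'\mid P(s,a,s')>0\}$. A strategy is $\sigma\colon S\to\mathrm{Act}$ with $\sigma(s)\in\mathrm{Act}(s)$, inducing a Markov chain with transitions $P(s,\sigma(s),\cdot)$; $\Pr^\sigma_s(\Diamond T)$ is the probability of visiting $T$ from $s$ and $\Pr^{\min}_s(\Diamond T)=\min_\sigma\Pr^\sigma_s(\Diamond T)$. For an infinite path $s_0s_1\ldots$, the accumulated reward is $\sum_{k=0}^{n-1}\mathrm{rew}(s_k)$ with $n=\min\{i\mid s_i\in T\}$ if $T$ is visited, and $\infty$ otherwise; $\mathbb{E}^\sigma_s(\Diamond T)$ is its expectation under $\sigma$ from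 $s$, and $\mathbb{E}^{\max}_s(\Diamond T)=\max_\sigma\mathbb{E}^\sigma_s(\Diamond T)$. $E^{\max}(x)(s)=0$ for $s\in T$ and $\mathrm{rew}(s)+\max_{a\in\mathrm{Act}(s)}\sum_{s'\in\mathrm{Post}(s,a)}P(s,a,s')x(s')$ for $s\notin T$, with $p\cdot\infty=\infty$ for $p>0$, $a+\infty=\infty$. The least fixed point is taken w.r.t. the pointwise order on $[0,\infty]^S$. *)

theory Defs
  imports Complex_Main "HOL-Library.Extended_Nonnegative_Real"
begin

definition Act :: "('s::finite \<Rightarrow> 'a::finite \<Rightarrow> 's \<Rightarrow> real) \<Rightarrow> 's \<Rightarrow> 'a set" where
  "Act P s = {a. (\<Sum>s'\<in>UNIV. P s a s') = 1}"

definition Post :: "('s::finite \<Rightarrow> 'a::finite \<Rightarrow> 's \<Rightarrow> real) \<Rightarrow> 's \<Rightarrow> 'a \<Rightarrow> 's set" where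
  "Post P s a = {s'. P s a s' > 0}"

definition is_mdp :: "('s::finite \<Rightarrow> 'a::finite \<Rightarrow> 's \<Rightarrow> real) \<Rightarrow> bool" where
  "is_mdp P \<longleftrightarrow> (\<forall>s a s'. 0 \<le> P s a s' \<and> P s a s' \<le> 1)
     \<and> (\<forall>s a. (\<Sum>s'\<in>UNIV. P s a s') \<in> {0, 1})
     \<and> (\<forall>s. Act P s \<noteq> {})"

definition strategies :: "('s::finite \<Rightarrow> 'a::finite \<Rightarrow> 's \<Rightarrow> real) \<Rightarrow> ('s \<Rightarrow> 'a) set" where
  "strategies P = {\<sigma>. \<forall>s. \<sigma> s \<in> Act P s}"

text \<open>Probability of the finite path s, t1, ..., tn in the Markov chain induced by \<sigma>
  (probability of the corresponding cylinder set of infinite paths).\<close>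
fun path_prob :: "('s \<Rightarrow> 'a \<Rightarrow> 's \<Rightarrow> real) \<Rightarrow> ('s \<Rightarrow> 'a) \<Rightarrow> 's \<Rightarrow> 's list \<Rightarrow> real" where
  "path_prob P \<sigma> s [] = 1"
| "path_prob P \<sigma> s (t # ts) = P s (\<sigma> s) t * path_prob P \<sigma> t ts"

definition hit_paths :: "'s set \<Rightarrow> 's \<Rightarrow> nat \<Rightarrow> 's list set" where
  "hit_paths T s n = {ts. length ts = n \<and> (s # ts) ! n \<in> T \<and> (\<forall>i<n. (s # ts) ! i \<notin> T)}"

text \<open>\<open>Pr^\<sigma>_s(\<Diamond>T)\<close>: the event of visiting T is the disjoint union of the cylinders of
  the first-hitting finite paths.\<close>
definition reach_prob :: "('s::finite \<Rightarrow> 'a::finite \<Rightarrow> 's \<Rightarrow> real) \<Rightarrow> ('s \<Rightarrow> 'a) \<Rightarrow> 's set \<Rightarrow> 's \<Rightarrow> ennreal" where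
  "reach_prob P \<sigma> T s = (\<Sum>n. \<Sum>ts\<in>hit_paths T s n. ennreal (path_prob P \<sigma> s ts))"

definition min_reach_prob :: "('s::finite \<Rightarrow> 'a::finite \<Rightarrow> 's \<Rightarrow> real) \<Rightarrow> 's set \<Rightarrow> 's \<Rightarrow> ennreal" where
  "min_reach_prob P T s = Min ((\<lambda>\<sigma>. reach_prob P \<sigma> T s) ` strategies P)"

text \<open>\<open>\<EE>^\<sigma>_s(\<Diamond>T)\<close>: the accumulated reward is constant (= sum of rewards before the
  first visit of T) on each first-hitting cylinder, and \<infinity> on the paths never visiting T,
  which have probability 1 - Pr^\<sigma>_s(\<Diamond>T).\<close>
definition exp_rew :: "('s::finite \<Rightarrow> 'a::finite \<Rightarrow> 's \<Rightarrow> real) \<Rightarrow> ('s \<Rightarrow> real) \<Rightarrow> ('s \<Rightarrow> 'a) \<Rightarrow> 's set \<Rightarrow> 's \<Rightarrow> ennreal" where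
  "exp_rew P rew \<sigma> T s =
     (\<Sum>n. \<Sum>ts\<in>hit_paths T s n.
        ennreal (path_prob P \<sigma> s ts) * ennreal (\<Sum>k<n. rew ((s # ts) ! k)))
     + top * (1 - reach_prob P \<sigma> T s)"

definition max_exp_rew :: "('s::finite \<Rightarrow> 'a::finite \<Rightarrow> 's \<Rightarrow> real) \<Rightarrow> ('s \<Rightarrow> real) \<Rightarrow> 's set \<Rightarrow> 's \<Rightarrow> ennreal" where
  "max_exp_rew P rew T s = Max ((\<lambda>\<sigma>. exp_rew P rew \<sigma> T s) ` strategies P)"

definition Emax_op :: "('s::finite \<Rightarrow> 'a::finite \<Rightarrow> 's \<Rightarrow> real) \<Rightarrow> ('s \<Rightarrow> real) \<Rightarrow> 's set \<Rightarrow> ('s \<Rightarrow> ennreal) \<Rightarrow> 's \<Rightarrow> ennreal" where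
  "Emax_op P rew T x s =
     (if s \<in> T then 0
      else ennreal (rew s) + Max ((\<lambda>a. \<Sum>s'\<in>Post P s a. ennreal (P s a s') * x s') ` Act P s))"

definition Emax_tilde_op :: "('s::finite \<Rightarrow> 'a::finite \<Rightarrow> 's \<Rightarrow> real) \<Rightarrow> ('s \<Rightarrow> real) \<Rightarrow> 's set \<Rightarrow> ('s \<Rightarrow> ennreal) \<Rightarrow> 's \<Rightarrow> ennreal" where
  "Emax_tilde_op P rew T x s =
     (if min_reach_prob P T s > 0 then Emax_op P rew T x s else top)"

end

theory Submission
  imports Defs
begin

(*
  For a fixed memoryless strategy, the expected reward is infinite from every state that misses T
  with positive probability, and otherwise it is the limit of the rewards collected within n steps.

  Upper bound: for any prefixed point L of the modified operator, the states with L < top form a set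
  that is closed under all actions and on which the minimal probability of reaching T is positive.
  On such a set every strategy reaches T almost surely, because in a finite closed set the
  probability of avoiding T decays geometrically; there the n-step rewards are bounded by L.

  Lower bound: for L = lfp we build one memoryless strategy. It keeps the states of minimal
  reachability probability 0 among themselves and moves every state of their attractor one step
  closer to them, so from the attractor T is missed with positive probability. On the remaining
  states every strategy reaches T almost surely, L is finite (it is below a potential built from
  the maximal probabilities of avoiding T for n steps), and the strategy is greedy for L. Unfolding
  the Bellman equation of L n times bounds L by the n-step reward plus a multiple of the
  probability of avoiding T for n steps, which tends to 0.
*)

lemma finite_hit_paths: "finite (hit_paths T (s::'s::finite) n)"
proof (rule finite_subset)
  show "hit_paths T s n \<subseteq> {xs. set xs \<subseteq> UNIV \<and> length xs = n}"
    by (auto simp: hit_paths_def)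
qed (use finite_lists_length_eq[of "UNIV::'s set" n] in simp)

lemma hit_paths_0: "hit_paths T s 0 = (if s \<in> T then {[]} else {})"
  by (auto simp: hit_paths_def)

lemma hit_paths_Suc_target: "s \<in> T \<Longrightarrow> hit_paths T s (Suc n) = {}"
  by (auto simp: hit_paths_def)

lemma hit_paths_Suc:
  assumes "s \<notin> T"
  shows "hit_paths T s (Suc n) = (\<lambda>(u, ts). u # ts) ` (SIGMA u:UNIV. hit_paths T u n)"
proof (intro set_eqI iffI)
  fix xs assume xs: "xs \<in> hit_paths T s (Suc n)"
  then obtain u ts where xs_eq: "xs = u # ts"
    by (cases xs) (auto simp: hit_paths_def)
  have "ts \<in> hit_paths T u n"
    using xs unfolding xs_eq hit_paths_def by (fastforce dest: spec[of _ "Suc _"])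
  then show "xs \<in> (\<lambda>(u, ts). u # ts) ` (SIGMA u:UNIV. hit_paths T u n)"
    using xs_eq by force
next
  fix xs assume "xs \<in> (\<lambda>(u, ts). u # ts) ` (SIGMA u:UNIV. hit_paths T u n)"
  then obtain u ts where xs_eq: "xs = u # ts" and ts: "ts \<in> hit_paths T u n"
    by auto
  have "(s # xs) ! i \<notin> T" if "i < Suc n" for i
    using that assms ts unfolding xs_eq hit_paths_def by (cases i) auto
  then show "xs \<in> hit_paths T s (Suc n)"
    using ts unfolding xs_eq hit_paths_def by auto
qed

lemma sum_hit_paths_Suc:
  assumes "s \<notin> T"
  shows "(\<Sum>xs\<in>hit_paths T (s::'s::finite) (Suc n). f xs)
    = (\<Sum>u\<in>UNIV. \<Sum>ts\<in>hit_paths T u n. f (u # ts))"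
proof -
  have "inj_on (\<lambda>(u, ts). u # ts) (SIGMA u:UNIV. hit_paths T u n)"
    by (auto simp: inj_on_def)
  then have "(\<Sum>xs\<in>hit_paths T s (Suc n). f xs)
      = (\<Sum>(u, ts)\<in>(SIGMA u:UNIV. hit_paths T u n). f (u # ts))"
    unfolding hit_paths_Suc[OF assms] by (simp add: sum.reindex split_def)
  also have "\<dots> = (\<Sum>u\<in>UNIV. \<Sum>ts\<in>hit_paths T u n. f (u # ts))"
    by (simp add: sum.Sigma finite_hit_paths)
  finally show ?thesis .
qed

definition hit_prob :: "('s \<Rightarrow> 'a \<Rightarrow> 's \<Rightarrow> real) \<Rightarrow> 's set \<Rightarrow> ('s \<Rightarrow> 'a) \<Rightarrow> nat \<Rightarrow> 's \<Rightarrow> real"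
  where "hit_prob P T \<sigma> n s = (\<Sum>ts\<in>hit_paths T s n. path_prob P \<sigma> s ts)"

definition hit_rew ::
    "('s \<Rightarrow> 'a \<Rightarrow> 's \<Rightarrow> real) \<Rightarrow> ('s \<Rightarrow> real) \<Rightarrow> 's set \<Rightarrow> ('s \<Rightarrow> 'a) \<Rightarrow> nat \<Rightarrow> 's \<Rightarrow> real"
  where "hit_rew P rew T \<sigma> n s =
    (\<Sum>ts\<in>hit_paths T s n. path_prob P \<sigma> s ts * (\<Sum>k<n. rew ((s # ts) ! k)))"

definition reach_real :: "('s \<Rightarrow> 'a \<Rightarrow> 's \<Rightarrow> real) \<Rightarrow> 's set \<Rightarrow> ('s \<Rightarrow> 'a) \<Rightarrow> 's \<Rightarrow> real"
  where "reach_real P T \<sigma> s = (\<Sum>n. hit_prob P T \<sigma> n s)"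

fun avoid_prob :: "('s::finite \<Rightarrow> 'a \<Rightarrow> 's \<Rightarrow> real) \<Rightarrow> 's set \<Rightarrow> ('s \<Rightarrow> 'a) \<Rightarrow> nat \<Rightarrow> 's \<Rightarrow> real"
  where
    "avoid_prob P T \<sigma> 0 s = 1"
  | "avoid_prob P T \<sigma> (Suc n) s =
      (if s \<in> T then 0 else \<Sum>u\<in>UNIV. P s (\<sigma> s) u * avoid_prob P T \<sigma> n u)"

fun horizon_rew ::
    "('s::finite \<Rightarrow> 'a \<Rightarrow> 's \<Rightarrow> real) \<Rightarrow> ('s \<Rightarrow> real) \<Rightarrow> 's set \<Rightarrow> ('s \<Rightarrow> 'a) \<Rightarrow> nat \<Rightarrow> 's \<Rightarrow> real"
  where
    "horizon_rew P rew T \<sigma> 0 s = 0"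
  | "horizon_rew P rew T \<sigma> (Suc n) s =
      (if s \<in> T then 0 else rew s + (\<Sum>u\<in>UNIV. P s (\<sigma> s) u * horizon_rew P rew T \<sigma> n u))"

lemma hit_prob_0: "hit_prob P T \<sigma> 0 s = (if s \<in> T then 1 else 0)"
  by (simp add: hit_prob_def hit_paths_0)

lemma hit_prob_Suc:
  "hit_prob P T \<sigma> (Suc n) (s::'s::finite) =
    (if s \<in> T then 0 else \<Sum>u\<in>UNIV. P s (\<sigma> s) u * hit_prob P T \<sigma> n u)"
  by (simp add: hit_prob_def hit_paths_Suc_target sum_hit_paths_Suc sum_distrib_left)

lemma hit_rew_0: "hit_rew P rew T \<sigma> 0 s = 0"
  by (simp add: hit_rew_def)

lemma hit_rew_Suc:
  "hit_rew P rew T \<sigma> (Suc n) (s::'s::finite) = (if s \<in> T then 0 else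
    \<Sum>u\<in>UNIV. P s (\<sigma> s) u * (rew s * hit_prob P T \<sigma> n u + hit_rew P rew T \<sigma> n u))"
proof (cases "s \<in> T")
  case False
  have "(\<Sum>k<Suc n. rew ((s # u # ts) ! k)) = rew s + (\<Sum>k<n. rew ((u # ts) ! k))" for u ts
    by (subst sum.lessThan_Suc_shift) simp
  with False show ?thesis
    unfolding hit_rew_def hit_prob_def sum_hit_paths_Suc[OF False]
    by (simp add: sum_distrib_left sum_distrib_right algebra_simps sum.distrib)
qed (simp add: hit_rew_def hit_paths_Suc_target)

lemma sum_P_Act: "a \<in> Act P s \<Longrightarrow> (\<Sum>u\<in>UNIV. P s a u) = 1"
  by (simp add: Act_def)

lemma strategy_Act: "\<sigma> \<in> strategies P \<Longrightarrow> \<sigma> s \<in> Act P s"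
  by (simp add: strategies_def)

lemma strategy_choice:
  assumes "\<forall>s. \<exists>a\<in>Act P s. Q s a"
  shows "\<exists>\<sigma>\<in>strategies P. \<forall>s. Q s (\<sigma> s)"
proof -
  from assms have "\<forall>s. \<exists>a. a \<in> Act P s \<and> Q s a"
    by blast
  then have "\<exists>\<sigma>. \<forall>s. \<sigma> s \<in> Act P s \<and> Q s (\<sigma> s)"
    by (rule choice)
  then show ?thesis
    by (auto simp: strategies_def)
qed

lemma finite_strategies: "finite (strategies (P :: 's::finite \<Rightarrow> 'a::finite \<Rightarrow> 's \<Rightarrow> real))"
  by (rule finite_subset[of _ UNIV]) auto

definition closed_under :: "('s \<Rightarrow> 'a \<Rightarrow> 's \<Rightarrow> real) \<Rightarrow> 's set \<Rightarrow> ('s \<Rightarrow> 'a) \<Rightarrow> 's set \<Rightarrow> bool"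
  where "closed_under P T \<sigma> U \<longleftrightarrow> (\<forall>t\<in>U - T. \<forall>u. 0 < P t (\<sigma> t) u \<longrightarrow> u \<in> U)"

definition Act_closed :: "('s::finite \<Rightarrow> 'a::finite \<Rightarrow> 's \<Rightarrow> real) \<Rightarrow> 's set \<Rightarrow> 's set \<Rightarrow> bool"
  where "Act_closed P T U \<longleftrightarrow> (\<forall>t\<in>U - T. \<forall>a\<in>Act P t. \<forall>u. 0 < P t a u \<longrightarrow> u \<in> U)"

lemma Act_closed_imp_closed_under: "Act_closed P T U \<Longrightarrow> \<sigma> \<in> strategies P \<Longrightarrow> closed_under P T \<sigma> U"
  by (auto simp: Act_closed_def closed_under_def strategies_def)

lemma closed_underD: "closed_under P T \<sigma> U \<Longrightarrow> t \<in> U \<Longrightarrow> t \<notin> T \<Longrightarrow> 0 < P t (\<sigma> t) u \<Longrightarrow> u \<in> U"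
  by (auto simp: closed_under_def)

locale mdp =
  fixes P :: "'s::finite \<Rightarrow> 'a::finite \<Rightarrow> 's \<Rightarrow> real" and T :: "'s set"
  assumes is_mdp: "is_mdp P"
begin

lemma P_nonneg: "0 \<le> P s a u"
  using is_mdp by (simp add: is_mdp_def)

lemma Act_nonempty: "Act P s \<noteq> {}"
  using is_mdp by (simp add: is_mdp_def)

lemma strategies_nonempty: "strategies P \<noteq> {}"
  using strategy_choice[of P "\<lambda>_ _. True"] Act_nonempty by blast

lemma sum_Post: "(\<Sum>u\<in>Post P s a. ennreal (P s a u) * x u) = (\<Sum>u\<in>UNIV. ennreal (P s a u) * x u)"
  by (rule sum.mono_neutral_left) (auto simp: Post_def not_less ennreal_eq_0_iff)

lemma ennreal_add_sum_P:
  assumes "0 \<le> r" and "\<And>u. 0 \<le> g u"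
  shows "ennreal (r + (\<Sum>u\<in>UNIV. P t a u * g u))
    = ennreal r + (\<Sum>u\<in>UNIV. ennreal (P t a u) * ennreal (g u))"
  using assms P_nonneg
  by (simp add: ennreal_plus sum_nonneg sum_ennreal[symmetric] ennreal_mult'' del: sum_ennreal)

lemma sum_P_ennreal_add:
  assumes "\<sigma> \<in> strategies P"
  shows "c + (\<Sum>u\<in>UNIV. ennreal (P t (\<sigma> t) u) * x u) = (\<Sum>u\<in>UNIV. ennreal (P t (\<sigma> t) u) * (c + x u))"
proof -
  have "(\<Sum>u\<in>UNIV. ennreal (P t (\<sigma> t) u)) = 1"
    using sum_P_Act[OF strategy_Act[OF assms]] P_nonneg by (simp add: sum_ennreal)
  then show ?thesis
    by (simp add: distrib_left sum.distrib sum_distrib_right[symmetric])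
qed

lemma path_prob_nonneg: "0 \<le> path_prob P \<sigma> s ts"
  by (induction ts arbitrary: s) (auto simp: P_nonneg)

lemma hit_prob_nonneg: "0 \<le> hit_prob P T \<sigma> n s"
  unfolding hit_prob_def by (simp add: sum_nonneg path_prob_nonneg)

lemma avoid_prob_nonneg: "0 \<le> avoid_prob P T \<sigma> n s"
  by (induction n arbitrary: s) (auto intro!: sum_nonneg simp: P_nonneg)

lemma sum_hit_prob_add_avoid_prob:
  assumes "\<sigma> \<in> strategies P"
  shows "(\<Sum>k<n. hit_prob P T \<sigma> k s) + avoid_prob P T \<sigma> n s = 1"
proof (induction n arbitrary: s)
  case (Suc n)
  show ?case
  proof (cases "s \<in> T")
    case False
    have "(\<Sum>k<Suc n. hit_prob P T \<sigma> k s) + avoid_prob P T \<sigma> (Suc n) s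
        = (\<Sum>u\<in>UNIV. P s (\<sigma> s) u * ((\<Sum>k<n. hit_prob P T \<sigma> k u) + avoid_prob P T \<sigma> n u))"
      using False
      by (simp add: sum.lessThan_Suc_shift hit_prob_0 hit_prob_Suc sum_distrib_left sum.distrib
          sum.swap[of _ "{..<n}"] algebra_simps del: sum.lessThan_Suc)
    also have "\<dots> = 1"
      using Suc.IH sum_P_Act[OF strategy_Act[OF assms]] by simp
    finally show ?thesis .
  qed (simp add: sum.lessThan_Suc_shift hit_prob_0 hit_prob_Suc del: sum.lessThan_Suc)
qed simp

lemma avoid_prob_antimono:
  assumes "\<sigma> \<in> strategies P" and "n \<le> m"
  shows "avoid_prob P T \<sigma> m s \<le> avoid_prob P T \<sigma> n s"
proof -
  have "(\<Sum>k<n. hit_prob P T \<sigma> k s) \<le> (\<Sum>k<m. hit_prob P T \<sigma> k s)"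
    using assms(2) by (intro sum_mono2) (auto simp: hit_prob_nonneg)
  then show ?thesis
    using sum_hit_prob_add_avoid_prob[OF assms(1), where n=n and s=s]
      sum_hit_prob_add_avoid_prob[OF assms(1), where n=m and s=s]
    by linarith
qed

lemma summable_hit_prob:
  assumes "\<sigma> \<in> strategies P"
  shows "summable (\<lambda>n. hit_prob P T \<sigma> n s)"
proof (rule summableI_nonneg_bounded)
  show "(\<Sum>k<n. hit_prob P T \<sigma> k s) \<le> 1" for n
    using sum_hit_prob_add_avoid_prob[OF assms, where n=n and s=s] avoid_prob_nonneg[of \<sigma> n s]
    by linarith
qed (rule hit_prob_nonneg)

lemma avoid_prob_tendsto:
  assumes "\<sigma> \<in> strategies P"
  shows "(\<lambda>n. avoid_prob P T \<sigma> n s) \<longlonglongrightarrow> 1 - reach_real P T \<sigma> s"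
proof -
  have "(\<lambda>n. 1 - (\<Sum>k<n. hit_prob P T \<sigma> k s)) \<longlonglongrightarrow> 1 - reach_real P T \<sigma> s"
    unfolding reach_real_def by (intro tendsto_intros summable_LIMSEQ summable_hit_prob assms)
  moreover have "(\<lambda>n. 1 - (\<Sum>k<n. hit_prob P T \<sigma> k s)) = (\<lambda>n. avoid_prob P T \<sigma> n s)"
    using sum_hit_prob_add_avoid_prob[OF assms] by (intro ext) (metis add_diff_cancel_left')
  ultimately show ?thesis by simp
qed

lemma reach_real_nonneg: "\<sigma> \<in> strategies P \<Longrightarrow> 0 \<le> reach_real P T \<sigma> s"
  unfolding reach_real_def by (intro suminf_nonneg summable_hit_prob hit_prob_nonneg)

lemma reach_real_le_1:
  assumes "\<sigma> \<in> strategies P"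
  shows "reach_real P T \<sigma> s \<le> 1"
  using LIMSEQ_le_const[OF avoid_prob_tendsto[OF assms]] avoid_prob_nonneg by force

lemma one_minus_reach_real_le_avoid_prob:
  assumes "\<sigma> \<in> strategies P"
  shows "1 - reach_real P T \<sigma> s \<le> avoid_prob P T \<sigma> n s"
  using avoid_prob_antimono[OF assms]
  by (intro LIMSEQ_le_const2[OF avoid_prob_tendsto[OF assms]]) auto

lemma reach_real_target:
  assumes "\<sigma> \<in> strategies P" and "s \<in> T"
  shows "reach_real P T \<sigma> s = 1"
proof -
  have "(\<lambda>n. hit_prob P T \<sigma> n s) = (\<lambda>n. if n = 0 then 1 else 0)"
    using assms(2) by (auto simp: fun_eq_iff hit_prob_0 hit_prob_Suc gr0_conv_Suc)
  then show ?thesis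
    unfolding reach_real_def using sums_single[of 0 "\<lambda>_. 1::real"] by (simp add: sums_iff)
qed

lemma reach_real_step:
  assumes "\<sigma> \<in> strategies P" and "s \<notin> T"
  shows "reach_real P T \<sigma> s = (\<Sum>u\<in>UNIV. P s (\<sigma> s) u * reach_real P T \<sigma> u)"
proof -
  have "reach_real P T \<sigma> s = (\<Sum>n. hit_prob P T \<sigma> (Suc n) s)"
    unfolding reach_real_def
    using suminf_split_head[OF summable_hit_prob[OF assms(1)]] assms(2) by (simp add: hit_prob_0)
  also have "\<dots> = (\<Sum>n. \<Sum>u\<in>UNIV. P s (\<sigma> s) u * hit_prob P T \<sigma> n u)"
    using assms(2) by (simp add: hit_prob_Suc)
  also have "\<dots> = (\<Sum>u\<in>UNIV. \<Sum>n. P s (\<sigma> s) u * hit_prob P T \<sigma> n u)"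
    by (intro suminf_sum summable_mult summable_hit_prob assms(1))
  also have "\<dots> = (\<Sum>u\<in>UNIV. P s (\<sigma> s) u * reach_real P T \<sigma> u)"
    unfolding reach_real_def by (intro sum.cong refl suminf_mult summable_hit_prob assms(1))
  finally show ?thesis .
qed

lemma suminf_ennreal_hit_prob:
  assumes "\<sigma> \<in> strategies P"
  shows "(\<Sum>n. ennreal (hit_prob P T \<sigma> n s)) = ennreal (reach_real P T \<sigma> s)"
  unfolding reach_real_def by (intro suminf_ennreal2 hit_prob_nonneg summable_hit_prob assms)

lemma reach_prob_eq_reach_real:
  assumes "\<sigma> \<in> strategies P"
  shows "reach_prob P \<sigma> T s = ennreal (reach_real P T \<sigma> s)"
  unfolding reach_prob_def suminf_ennreal_hit_prob[OF assms, symmetric] hit_prob_def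
  by (simp add: sum_ennreal path_prob_nonneg)

lemma min_reach_prob_pos_iff:
  "0 < min_reach_prob P T s \<longleftrightarrow> (\<forall>\<sigma>\<in>strategies P. 0 < reach_real P T \<sigma> s)"
  unfolding min_reach_prob_def using finite_strategies strategies_nonempty
  by (simp add: Min_gr_iff reach_prob_eq_reach_real)

lemma reach_real_eq_0:
  assumes "closed_under P T \<sigma> U" and "U \<inter> T = {}" and "s \<in> U"
  shows "reach_real P T \<sigma> s = 0"
proof -
  have "\<forall>t\<in>U. hit_prob P T \<sigma> n t = 0" for n
  proof (induction n)
    case (Suc n)
    have "P t (\<sigma> t) u * hit_prob P T \<sigma> n u = 0" if "t \<in> U" for t u
      using Suc closed_underD[OF assms(1) that, of u] assms(2) that P_nonneg[of t "\<sigma> t" u] by force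
    then show ?case using assms(2) by (auto simp: hit_prob_Suc intro!: sum.neutral)
  qed (use assms(2) in \<open>auto simp: hit_prob_0\<close>)
  then show ?thesis using assms(3) by (simp add: reach_real_def)
qed

lemma reach_real_lt_1:
  assumes "\<sigma> \<in> strategies P" and "s \<notin> T" and "0 < P s (\<sigma> s) u" and "reach_real P T \<sigma> u < 1"
  shows "reach_real P T \<sigma> s < 1"
proof -
  have "reach_real P T \<sigma> s = (\<Sum>v\<in>UNIV. P s (\<sigma> s) v * reach_real P T \<sigma> v)"
    by (rule reach_real_step[OF assms(1,2)])
  also have "\<dots> < (\<Sum>v\<in>UNIV. P s (\<sigma> s) v * 1)"
  proof (rule sum_strict_mono_ex1)
    show "\<forall>v\<in>UNIV. P s (\<sigma> s) v * reach_real P T \<sigma> v \<le> P s (\<sigma> s) v * 1"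
      by (intro ballI mult_left_mono reach_real_le_1 assms(1) P_nonneg)
    show "\<exists>v\<in>UNIV. P s (\<sigma> s) v * reach_real P T \<sigma> v < P s (\<sigma> s) v * 1"
      using assms(3,4) by (intro bexI[of _ u] mult_strict_left_mono) auto
  qed simp
  also have "\<dots> = 1"
    using sum_P_Act[OF strategy_Act[OF assms(1)]] by simp
  finally show ?thesis .
qed

lemma avoid_prob_add_le:
  assumes "closed_under P T \<sigma> U" and "\<forall>t\<in>U. avoid_prob P T \<sigma> m t \<le> c" and "0 \<le> c"
    and "s \<in> U"
  shows "avoid_prob P T \<sigma> (m + n) s \<le> c * avoid_prob P T \<sigma> n s"
  using assms(4)
proof (induction n arbitrary: s)
  case (Suc n)
  show ?case
  proof (cases "s \<in> T")
    case False
    have "P s (\<sigma> s) u * avoid_prob P T \<sigma> (m + n) u \<le> P s (\<sigma> s) u * (c * avoid_prob P T \<sigma> n u)"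
      for u
    proof (cases "0 < P s (\<sigma> s) u")
      case True
      then show ?thesis
        using Suc closed_underD[OF assms(1) Suc.prems False] by (simp add: mult_left_mono)
    next
      case False
      then show ?thesis using P_nonneg[of s "\<sigma> s" u] by simp
    qed
    then have "avoid_prob P T \<sigma> (m + Suc n) s \<le> (\<Sum>u\<in>UNIV. P s (\<sigma> s) u * (c * avoid_prob P T \<sigma> n u))"
      using False by (simp add: sum_mono)
    also have "\<dots> = c * avoid_prob P T \<sigma> (Suc n) s"
      using False by (simp add: sum_distrib_left algebra_simps)
    finally show ?thesis .
  qed simp
qed (use assms(2) in simp)

lemma subsolution_le_avoid_prob:
  assumes "\<And>t. X t \<le> 1" and "\<And>t. t \<in> T \<Longrightarrow> X t \<le> 0"
    and "\<And>t. t \<notin> T \<Longrightarrow> X t \<le> (\<Sum>u\<in>UNIV. P t (\<sigma> t) u * X u)"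
  shows "X s \<le> avoid_prob P T \<sigma> n s"
proof (induction n arbitrary: s)
  case (Suc n)
  show ?case
  proof (cases "s \<in> T")
    case False
    have "X s \<le> (\<Sum>u\<in>UNIV. P s (\<sigma> s) u * X u)"
      by (rule assms(3)[OF False])
    also have "\<dots> \<le> (\<Sum>u\<in>UNIV. P s (\<sigma> s) u * avoid_prob P T \<sigma> n u)"
      by (intro sum_mono mult_left_mono Suc.IH P_nonneg)
    finally show ?thesis
      using False by simp
  qed (simp add: assms(2))
qed (simp add: assms(1))

lemma reach_real_eq_1:
  assumes "\<sigma> \<in> strategies P" and "closed_under P T \<sigma> U"
    and "\<And>t. t \<in> U \<Longrightarrow> 0 < reach_real P T \<sigma> t" and "s \<in> U"
  shows "reach_real P T \<sigma> s = 1"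
proof -
  have "\<exists>k. avoid_prob P T \<sigma> k t < 1" if "t \<in> U" for t
  proof (rule ccontr)
    assume "\<nexists>k. avoid_prob P T \<sigma> k t < 1"
    then have "1 - 0 \<le> 1 - reach_real P T \<sigma> t"
      by (intro LIMSEQ_le_const[OF avoid_prob_tendsto[OF assms(1)]]) (simp add: not_less)
    then show False using assms(3)[OF that] by simp
  qed
  then have "\<forall>t\<in>U. \<forall>\<^sub>F n in sequentially. avoid_prob P T \<sigma> n t < 1"
    unfolding eventually_sequentially by (metis avoid_prob_antimono[OF assms(1)] le_less_trans)
  then have "\<forall>\<^sub>F n in sequentially. \<forall>t\<in>U. avoid_prob P T \<sigma> n t < 1"
    by (intro eventually_ball_finite) auto
  then obtain m where m: "\<forall>t\<in>U. avoid_prob P T \<sigma> m t < 1"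
    unfolding eventually_sequentially by blast
  (* T is hit within m steps with probability at least 1 - c from every state of U, and U is
     closed, so avoiding T for k * m steps has probability at most c ^ k. *)
  define c where "c = Max (insert 0 ((\<lambda>t. avoid_prob P T \<sigma> m t) ` U))"
  have c: "0 \<le> c" "c < 1" "\<forall>t\<in>U. avoid_prob P T \<sigma> m t \<le> c"
    using m by (auto simp: c_def)
  have avoid_pow: "avoid_prob P T \<sigma> (k * m) t \<le> c ^ k" if "t \<in> U" for k t
    using that
  proof (induction k arbitrary: t)
    case (Suc k)
    have "avoid_prob P T \<sigma> (m + k * m) t \<le> c * avoid_prob P T \<sigma> (k * m) t"
      by (rule avoid_prob_add_le[OF assms(2) c(3,1) Suc.prems])
    also have "\<dots> \<le> c * c ^ k"
      using Suc c(1) by (simp add: mult_left_mono)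
    finally show ?case by simp
  qed simp
  have "1 - reach_real P T \<sigma> s \<le> 0"
  proof (rule LIMSEQ_le_const[OF LIMSEQ_realpow_zero[OF c(1,2)]], intro exI allI impI)
    show "1 - reach_real P T \<sigma> s \<le> c ^ k" for k
      using one_minus_reach_real_le_avoid_prob[OF assms(1)] avoid_pow[OF assms(4)] by (rule order_trans)
  qed
  then show ?thesis using reach_real_le_1[OF assms(1)] by (simp add: antisym)
qed

lemma reach_real_eq_1_Act_closed:
  assumes "Act_closed P T U" and "\<And>t. t \<in> U \<Longrightarrow> 0 < min_reach_prob P T t"
    and "\<sigma> \<in> strategies P" and "s \<in> U"
  shows "reach_real P T \<sigma> s = 1"
proof (rule reach_real_eq_1[OF assms(3) Act_closed_imp_closed_under[OF assms(1,3)] _ assms(4)])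
  show "0 < reach_real P T \<sigma> t" if "t \<in> U" for t
    using assms(2)[OF that] assms(3) by (simp add: min_reach_prob_pos_iff)
qed

lemma min_reach_prob_target: "s \<in> T \<Longrightarrow> 0 < min_reach_prob P T s"
  by (simp add: min_reach_prob_pos_iff reach_real_target)

definition zero_reach :: "'s set"
  where "zero_reach = {t. min_reach_prob P T t = 0}"

lemma zero_reach_action:
  assumes "t \<in> zero_reach"
  obtains a where "a \<in> Act P t" and "\<And>u. 0 < P t a u \<Longrightarrow> u \<in> zero_reach"
proof -
  have "\<not> 0 < min_reach_prob P T t"
    using assms by (simp add: zero_reach_def)
  then obtain \<sigma> where \<sigma>: "\<sigma> \<in> strategies P" and "\<not> 0 < reach_real P T \<sigma> t"
    by (auto simp: min_reach_prob_pos_iff)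
  then have zero: "reach_real P T \<sigma> t = 0"
    using reach_real_nonneg[OF \<sigma>] by (simp add: not_less antisym)
  have "t \<notin> T"
  proof
    assume "t \<in> T"
    then show False
      using min_reach_prob_target \<open>\<not> 0 < min_reach_prob P T t\<close> by simp
  qed
  then have "(\<Sum>u\<in>UNIV. P t (\<sigma> t) u * reach_real P T \<sigma> u) = 0"
    using reach_real_step[OF \<sigma>] zero by simp
  then have succ_zero: "P t (\<sigma> t) u * reach_real P T \<sigma> u = 0" for u
    by (subst (asm) sum_nonneg_eq_0_iff) (auto intro: mult_nonneg_nonneg P_nonneg reach_real_nonneg \<sigma>)
  have "u \<in> zero_reach" if "0 < P t (\<sigma> t) u" for u
  proof -
    have "reach_real P T \<sigma> u = 0"
      using that succ_zero[of u] by simp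
    then have "\<not> 0 < min_reach_prob P T u"
      using \<sigma> unfolding min_reach_prob_pos_iff by (metis less_irrefl)
    then show ?thesis
      by (simp add: zero_reach_def)
  qed
  then show ?thesis
    using that strategy_Act[OF \<sigma>] by blast
qed

lemma zero_reach_Int_target: "zero_reach \<inter> T = {}"
proof (intro equals0I)
  fix t
  assume "t \<in> zero_reach \<inter> T"
  then show False
    using min_reach_prob_target[of t] by (simp add: zero_reach_def)
qed

end

fun attractor :: "('s::finite \<Rightarrow> 'a::finite \<Rightarrow> 's \<Rightarrow> real) \<Rightarrow> 's set \<Rightarrow> 's set \<Rightarrow> nat \<Rightarrow> 's set"
  where
    "attractor P T S 0 = S"
  | "attractor P T S (Suc n) =
      attractor P T S n \<union> {t. t \<notin> T \<and> (\<exists>a\<in>Act P t. \<exists>u\<in>attractor P T S n. 0 < P t a u)}"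

lemma attractor_mono: "n \<le> m \<Longrightarrow> attractor P T S n \<subseteq> attractor P T S m"
  by (rule lift_Suc_mono_le[of "attractor P T S"]) auto

lemma attractor_enter:
  assumes "t \<in> attractor P T S m" and "t \<notin> S"
  obtains n where "t \<in> attractor P T S (Suc n)" and "t \<notin> attractor P T S n"
  using assms by (induction m) auto

lemma attractor_enter_unique:
  assumes "t \<in> attractor P T S (Suc n)" "t \<notin> attractor P T S n"
    and "t \<in> attractor P T S (Suc m)" "t \<notin> attractor P T S m"
  shows "n = m"
  using assms attractor_mono[of "Suc n" m] attractor_mono[of "Suc m" n] by (meson linorder_neqE_nat Suc_leI subsetD)

lemma Act_closed_Compl_attractor: "Act_closed P T (- (\<Union>n. attractor P T S n))"
  unfolding Act_closed_def
proof (intro ballI allI impI)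
  fix t a u
  assume t: "t \<in> - (\<Union>n. attractor P T S n) - T" and "a \<in> Act P t" and "0 < P t a u"
  show "u \<in> - (\<Union>n. attractor P T S n)"
  proof
    assume "u \<in> (\<Union>n. attractor P T S n)"
    then obtain n where "u \<in> attractor P T S n" by blast
    with t \<open>a \<in> Act P t\<close> \<open>0 < P t a u\<close> have "t \<in> attractor P T S (Suc n)" by auto
    with t show False by blast
  qed
qed

context mdp
begin

lemma reach_real_lt_1_attractor:
  assumes "\<sigma> \<in> strategies P" and "closed_under P T \<sigma> S" and "S \<inter> T = {}"
    and "\<forall>t n. t \<in> attractor P T S (Suc n) \<longrightarrow> t \<notin> attractor P T S n
      \<longrightarrow> (\<exists>u\<in>attractor P T S n. 0 < P t (\<sigma> t) u)"
    and "t \<in> attractor P T S m"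
  shows "reach_real P T \<sigma> t < 1"
  using assms(5)
proof (induction m arbitrary: t)
  case 0
  then show ?case using reach_real_eq_0[OF assms(2,3)] by simp
next
  case (Suc m)
  show ?case
  proof (cases "t \<in> attractor P T S m")
    case False
    with Suc.prems obtain u where "u \<in> attractor P T S m" and "0 < P t (\<sigma> t) u"
      using assms(4) by blast
    moreover have "t \<notin> T"
      using Suc.prems False by auto
    ultimately show ?thesis
      using reach_real_lt_1[OF assms(1)] Suc.IH by blast
  qed (rule Suc.IH)
qed

(* The states from which some strategy misses T with positive probability. *)
definition can_avoid :: "'s set"
  where "can_avoid = (\<Union>n. attractor P T zero_reach n)"

lemma min_reach_prob_pos_if_not_can_avoid:
  assumes "t \<notin> can_avoid"
  shows "0 < min_reach_prob P T t"
proof (rule ccontr)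
  assume "\<not> 0 < min_reach_prob P T t"
  then have "t \<in> attractor P T zero_reach 0"
    by (simp add: zero_reach_def)
  with assms show False
    unfolding can_avoid_def by blast
qed

lemma Act_closed_Compl_can_avoid: "Act_closed P T (- can_avoid)"
  unfolding can_avoid_def by (rule Act_closed_Compl_attractor)

lemma can_avoid_action:
  assumes "\<forall>t. \<exists>a\<in>Act P t. G t a"
  shows "\<forall>t. \<exists>a\<in>Act P t. (t \<in> zero_reach \<longrightarrow> (\<forall>u. 0 < P t a u \<longrightarrow> u \<in> zero_reach))
    \<and> (\<forall>n. t \<in> attractor P T zero_reach (Suc n) \<longrightarrow> t \<notin> attractor P T zero_reach n
        \<longrightarrow> (\<exists>u\<in>attractor P T zero_reach n. 0 < P t a u))
    \<and> (t \<notin> can_avoid \<longrightarrow> G t a)"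
proof
  fix t
  have zero_reach_attractor: "zero_reach \<subseteq> attractor P T zero_reach n" for n
    using attractor_mono[of 0 n] by simp
  consider (stay) "t \<in> zero_reach" | (attract) "t \<in> can_avoid - zero_reach" | (greedy) "t \<notin> can_avoid"
    by blast
  then show "\<exists>a\<in>Act P t. (t \<in> zero_reach \<longrightarrow> (\<forall>u. 0 < P t a u \<longrightarrow> u \<in> zero_reach))
    \<and> (\<forall>n. t \<in> attractor P T zero_reach (Suc n) \<longrightarrow> t \<notin> attractor P T zero_reach n
        \<longrightarrow> (\<exists>u\<in>attractor P T zero_reach n. 0 < P t a u))
    \<and> (t \<notin> can_avoid \<longrightarrow> G t a)"
  proof cases
    case stay
    then obtain a where a: "a \<in> Act P t" and "\<forall>u. 0 < P t a u \<longrightarrow> u \<in> zero_reach"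
      using zero_reach_action by blast
    moreover have "t \<in> attractor P T zero_reach n" for n
      using stay zero_reach_attractor by blast
    ultimately show ?thesis
      unfolding can_avoid_def by (intro bexI[OF _ a]) auto
  next
    case attract
    then obtain m where "t \<in> attractor P T zero_reach m"
      unfolding can_avoid_def by blast
    with attract obtain n where n: "t \<in> attractor P T zero_reach (Suc n)" "t \<notin> attractor P T zero_reach n"
      using attractor_enter by blast
    then obtain a where "a \<in> Act P t" and "\<exists>u\<in>attractor P T zero_reach n. 0 < P t a u"
      by auto
    with attract n show ?thesis
      using attractor_enter_unique[OF n] by blast
  next
    case greedy
    then have "t \<notin> attractor P T zero_reach (Suc n)" for n
      unfolding can_avoid_def by blast
    moreover obtain a where "a \<in> Act P t" and "G t a"
      using assms by blast
    ultimately show ?thesis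
      using greedy zero_reach_attractor[of 0] unfolding can_avoid_def by blast
  qed
qed

lemma strategy_can_avoid:
  assumes "\<forall>t. \<exists>a\<in>Act P t. G t a"
  obtains \<sigma> where "\<sigma> \<in> strategies P" and "\<And>t. t \<in> can_avoid \<Longrightarrow> reach_real P T \<sigma> t < 1"
    and "\<And>t. t \<notin> can_avoid \<Longrightarrow> G t (\<sigma> t)"
proof -
  from strategy_choice[OF can_avoid_action[OF assms]] obtain \<sigma> where \<sigma>: "\<sigma> \<in> strategies P"
    and stay: "closed_under P T \<sigma> zero_reach"
    and attract: "\<forall>t n. t \<in> attractor P T zero_reach (Suc n) \<longrightarrow> t \<notin> attractor P T zero_reach n
      \<longrightarrow> (\<exists>u\<in>attractor P T zero_reach n. 0 < P t (\<sigma> t) u)"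
    and greedy: "\<And>t. t \<notin> can_avoid \<Longrightarrow> G t (\<sigma> t)"
    unfolding closed_under_def by blast
  have "reach_real P T \<sigma> t < 1" if "t \<in> can_avoid" for t
  proof -
    from that obtain n where "t \<in> attractor P T zero_reach n"
      unfolding can_avoid_def by blast
    then show ?thesis
      by (rule reach_real_lt_1_attractor[OF \<sigma> stay zero_reach_Int_target attract])
  qed
  with \<sigma> greedy that show ?thesis
    by blast
qed

end

fun max_avoid_prob :: "('s::finite \<Rightarrow> 'a::finite \<Rightarrow> 's \<Rightarrow> real) \<Rightarrow> 's set \<Rightarrow> nat \<Rightarrow> 's \<Rightarrow> real"
  where
    "max_avoid_prob P T 0 s = 1"
  | "max_avoid_prob P T (Suc n) s =
      (if s \<in> T then 0 else Max ((\<lambda>a. \<Sum>u\<in>UNIV. P s a u * max_avoid_prob P T n u) ` Act P s))"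

context mdp
begin

lemma max_avoid_prob_nonneg: "0 \<le> max_avoid_prob P T n s"
proof (induction n arbitrary: s)
  case (Suc n)
  obtain a where "a \<in> Act P s"
    using Act_nonempty by blast
  have "0 \<le> (\<Sum>u\<in>UNIV. P s a u * max_avoid_prob P T n u)"
    by (intro sum_nonneg mult_nonneg_nonneg P_nonneg Suc.IH)
  also have "\<dots> \<le> Max ((\<lambda>a. \<Sum>u\<in>UNIV. P s a u * max_avoid_prob P T n u) ` Act P s)"
    using \<open>a \<in> Act P s\<close> by (intro Max_ge) auto
  finally show ?case by simp
qed simp

lemma max_avoid_prob_le_1: "max_avoid_prob P T n s \<le> 1"
proof (induction n arbitrary: s)
  case (Suc n)
  have "(\<Sum>u\<in>UNIV. P s a u * max_avoid_prob P T n u) \<le> 1" if "a \<in> Act P s" for a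
    using Suc.IH sum_P_Act[OF that] sum_mono[of UNIV "\<lambda>u. P s a u * max_avoid_prob P T n u" "P s a"]
    by (simp add: mult_left_le P_nonneg)
  then show ?case by (simp add: Act_nonempty)
qed simp

lemma sum_P_max_avoid_prob_le:
  assumes "s \<notin> T" and "a \<in> Act P s"
  shows "(\<Sum>u\<in>UNIV. P s a u * max_avoid_prob P T n u) \<le> max_avoid_prob P T (Suc n) s"
  using assms by simp

lemma max_avoid_prob_Suc_le: "max_avoid_prob P T (Suc n) s \<le> max_avoid_prob P T n s"
proof (induction n arbitrary: s)
  case (Suc n)
  have "(\<Sum>u\<in>UNIV. P s a u * max_avoid_prob P T (Suc n) u) \<le> max_avoid_prob P T (Suc n) s"
    if "s \<notin> T" and "a \<in> Act P s" for a
    using Suc.IH sum_P_max_avoid_prob_le[OF that]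
    by (meson order_trans sum_mono mult_left_mono P_nonneg)
  then show ?case by (simp add: Act_nonempty)
qed (metis max_avoid_prob.simps(1) max_avoid_prob_le_1)

lemma max_avoid_prob_tendsto_INF:
  "(\<lambda>n. max_avoid_prob P T n s) \<longlonglongrightarrow> (INF n. max_avoid_prob P T n s)"
  by (intro LIMSEQ_decseq_INF decseq_SucI max_avoid_prob_Suc_le bdd_belowI[of _ 0])
    (auto simp: max_avoid_prob_nonneg)

lemma strategy_ge_INF_max_avoid_prob:
  "\<exists>\<sigma>\<in>strategies P. \<forall>n t. (INF k. max_avoid_prob P T k t) \<le> avoid_prob P T \<sigma> n t"
proof -
  define A where "A t = (INF k. max_avoid_prob P T k t)" for t
  have A_le: "A t \<le> max_avoid_prob P T n t" for n t
    unfolding A_def by (intro cINF_lower bdd_belowI[of _ 0]) (auto simp: max_avoid_prob_nonneg)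
  (* If every action fell strictly below the limit A t, then, Act being finite, this would already
     happen at some finite stage n, contradicting A t \<le> max_avoid_prob P T (Suc n) t. *)
  have "\<forall>t. \<exists>a\<in>Act P t. t \<notin> T \<longrightarrow> A t \<le> (\<Sum>u\<in>UNIV. P t a u * A u)"
  proof (rule allI, rule ccontr)
    fix t
    assume "\<not> (\<exists>a\<in>Act P t. t \<notin> T \<longrightarrow> A t \<le> (\<Sum>u\<in>UNIV. P t a u * A u))"
    then have lt: "\<forall>a\<in>Act P t. (\<Sum>u\<in>UNIV. P t a u * A u) < A t" and "t \<notin> T"
      using Act_nonempty by auto
    have "\<forall>a\<in>Act P t. \<forall>\<^sub>F n in sequentially. (\<Sum>u\<in>UNIV. P t a u * max_avoid_prob P T n u) < A t"
      using lt by (auto intro!: order_tendstoD(2) tendsto_sum tendsto_mult_left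
          max_avoid_prob_tendsto_INF[unfolded A_def[symmetric]])
    then have "\<forall>\<^sub>F n in sequentially. \<forall>a\<in>Act P t. (\<Sum>u\<in>UNIV. P t a u * max_avoid_prob P T n u) < A t"
      by (intro eventually_ball_finite) auto
    then obtain n where "\<forall>a\<in>Act P t. (\<Sum>u\<in>UNIV. P t a u * max_avoid_prob P T n u) < A t"
      unfolding eventually_sequentially by blast
    then have "max_avoid_prob P T (Suc n) t < A t"
      using \<open>t \<notin> T\<close> Act_nonempty by simp
    then show False
      using A_le[of t "Suc n"] by simp
  qed
  from strategy_choice[OF this] obtain \<sigma> where \<sigma>: "\<sigma> \<in> strategies P"
    and step: "\<And>t. t \<notin> T \<Longrightarrow> A t \<le> (\<Sum>u\<in>UNIV. P t (\<sigma> t) u * A u)"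
    by blast
  have "A t \<le> avoid_prob P T \<sigma> n t" for n t
  proof (rule subsolution_le_avoid_prob)
    show "A t \<le> 1" for t
      using A_le[of t 0] by simp
    show "A t \<le> 0" if "t \<in> T" for t
      using A_le[of t "Suc 0"] that by simp
  qed (rule step)
  then show ?thesis
    using \<sigma> unfolding A_def by blast
qed

lemma max_avoid_prob_tendsto_0:
  assumes "\<forall>\<sigma>\<in>strategies P. reach_real P T \<sigma> t = 1"
  shows "(\<lambda>n. max_avoid_prob P T n t) \<longlonglongrightarrow> 0"
proof -
  obtain \<sigma> where \<sigma>: "\<sigma> \<in> strategies P"
    and le: "\<forall>n. (INF k. max_avoid_prob P T k t) \<le> avoid_prob P T \<sigma> n t"
    using strategy_ge_INF_max_avoid_prob by blast
  have "(\<lambda>n. avoid_prob P T \<sigma> n t) \<longlonglongrightarrow> 0"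
    using avoid_prob_tendsto[OF \<sigma>, of t] assms \<sigma> by simp
  then have "(INF k. max_avoid_prob P T k t) \<le> 0"
    using le by (intro LIMSEQ_le_const) auto
  moreover have "0 \<le> (INF k. max_avoid_prob P T k t)"
    by (intro cINF_greatest max_avoid_prob_nonneg) simp
  ultimately show ?thesis
    using max_avoid_prob_tendsto_INF[of t] by simp
qed

lemma max_avoid_prob_le_half:
  assumes "Act_closed P T U" and "\<And>t. t \<in> U \<Longrightarrow> 0 < min_reach_prob P T t"
  obtains N where "\<And>t. t \<in> U \<Longrightarrow> max_avoid_prob P T N t \<le> 1/2"
proof -
  have "\<forall>t\<in>U. \<forall>\<^sub>F n in sequentially. max_avoid_prob P T n t < 1/2"
  proof
    fix t
    assume "t \<in> U"
    then have "\<forall>\<sigma>\<in>strategies P. reach_real P T \<sigma> t = 1"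
      using reach_real_eq_1_Act_closed[OF assms] by blast
    then show "\<forall>\<^sub>F n in sequentially. max_avoid_prob P T n t < 1/2"
      by (rule order_tendstoD(2)[OF max_avoid_prob_tendsto_0]) simp
  qed
  then have "\<forall>\<^sub>F n in sequentially. \<forall>t\<in>U. max_avoid_prob P T n t < 1/2"
    by (intro eventually_ball_finite) auto
  then show ?thesis
    using that unfolding eventually_sequentially by (meson less_imp_le order_refl)
qed

lemma max_avoid_potential_step:
  assumes "t \<notin> T" and "a \<in> Act P t" and "max_avoid_prob P T N t \<le> 1/2" and "0 \<le> c"
  shows "c + (\<Sum>u\<in>UNIV. P t a u * (2 * c * (\<Sum>k<N. max_avoid_prob P T k u)))
    \<le> 2 * c * (\<Sum>k<N. max_avoid_prob P T k t)"
proof -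
  have "(\<Sum>u\<in>UNIV. P t a u * (\<Sum>k<N. max_avoid_prob P T k u))
      = (\<Sum>k<N. \<Sum>u\<in>UNIV. P t a u * max_avoid_prob P T k u)"
    by (simp add: sum_distrib_left sum.swap[of _ UNIV])
  also have "\<dots> \<le> (\<Sum>k<N. max_avoid_prob P T (Suc k) t)"
    by (intro sum_mono sum_P_max_avoid_prob_le assms(1,2))
  also have "\<dots> = (\<Sum>k<N. max_avoid_prob P T k t) + max_avoid_prob P T N t - 1"
    using sum.lessThan_Suc_shift[of "\<lambda>k. max_avoid_prob P T k t" N] by simp
  finally have "(\<Sum>u\<in>UNIV. P t a u * (\<Sum>k<N. max_avoid_prob P T k u))
      \<le> (\<Sum>k<N. max_avoid_prob P T k t) - 1/2"
    using assms(3) by simp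
  then have "2 * c * (\<Sum>u\<in>UNIV. P t a u * (\<Sum>k<N. max_avoid_prob P T k u))
      \<le> 2 * c * ((\<Sum>k<N. max_avoid_prob P T k t) - 1/2)"
    using assms(4) by (intro mult_left_mono) simp_all
  then show ?thesis
    by (simp add: sum_distrib_left algebra_simps)
qed

end

locale reward_mdp = mdp P T for P :: "'s::finite \<Rightarrow> 'a::finite \<Rightarrow> 's \<Rightarrow> real" and T +
  fixes rew :: "'s \<Rightarrow> real"
  assumes rew_nonneg: "0 \<le> rew s"
begin

lemma hit_rew_nonneg: "0 \<le> hit_rew P rew T \<sigma> n s"
  unfolding hit_rew_def by (intro sum_nonneg mult_nonneg_nonneg path_prob_nonneg rew_nonneg)

lemma horizon_rew_nonneg: "0 \<le> horizon_rew P rew T \<sigma> n s"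
  by (induction n arbitrary: s) (auto intro!: sum_nonneg add_nonneg_nonneg rew_nonneg simp: P_nonneg)

lemma exp_rew_eq:
  assumes "\<sigma> \<in> strategies P"
  shows "exp_rew P rew \<sigma> T s
    = (\<Sum>n. ennreal (hit_rew P rew T \<sigma> n s)) + top * (1 - ennreal (reach_real P T \<sigma> s))"
proof -
  have "(\<Sum>ts\<in>hit_paths T s n. ennreal (path_prob P \<sigma> s ts) * ennreal (\<Sum>k<n. rew ((s # ts) ! k)))
      = ennreal (hit_rew P rew T \<sigma> n s)" for n
    unfolding hit_rew_def
    by (simp add: sum_ennreal[symmetric] ennreal_mult'' path_prob_nonneg rew_nonneg sum_nonneg
        mult_nonneg_nonneg del: sum_ennreal)
  then show ?thesis
    unfolding exp_rew_def reach_prob_eq_reach_real[OF assms] by simp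
qed

lemma exp_rew_eq_top:
  assumes "\<sigma> \<in> strategies P" and "reach_real P T \<sigma> s < 1"
  shows "exp_rew P rew \<sigma> T s = top"
proof -
  have "1 - ennreal (reach_real P T \<sigma> s) = ennreal (1 - reach_real P T \<sigma> s)"
    using reach_real_nonneg[OF assms(1)] by (metis ennreal_1 ennreal_minus)
  then show ?thesis
    using assms(2) by (simp add: exp_rew_eq[OF assms(1)] ennreal_top_mult)
qed

lemma exp_rew_eq_suminf:
  assumes "\<sigma> \<in> strategies P" and "reach_real P T \<sigma> s = 1"
  shows "exp_rew P rew \<sigma> T s = (\<Sum>n. ennreal (hit_rew P rew T \<sigma> n s))"
  using assms by (simp add: exp_rew_eq)

lemma sum_hit_rew_le_horizon_rew:
  assumes "\<sigma> \<in> strategies P"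
  shows "(\<Sum>k<n. hit_rew P rew T \<sigma> k s) \<le> horizon_rew P rew T \<sigma> n s"
proof (induction n arbitrary: s)
  case (Suc n)
  show ?case
  proof (cases "s \<in> T")
    case False
    have "(\<Sum>k<Suc n. hit_rew P rew T \<sigma> k s) = (\<Sum>u\<in>UNIV. P s (\<sigma> s) u *
        (rew s * (\<Sum>k<n. hit_prob P T \<sigma> k u) + (\<Sum>k<n. hit_rew P rew T \<sigma> k u)))"
      using False
      by (simp add: sum.lessThan_Suc_shift hit_rew_0 hit_rew_Suc sum_distrib_left sum.distrib
          sum.swap[of _ "{..<n}"] algebra_simps del: sum.lessThan_Suc)
    also have "\<dots> \<le> (\<Sum>u\<in>UNIV. P s (\<sigma> s) u * (rew s * 1 + horizon_rew P rew T \<sigma> n u))"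
      using sum_hit_prob_add_avoid_prob[OF assms] avoid_prob_nonneg
      by (intro sum_mono mult_left_mono add_mono Suc.IH P_nonneg rew_nonneg)
        (metis le_add_same_cancel1)
    also have "\<dots> = horizon_rew P rew T \<sigma> (Suc n) s"
      using False sum_P_Act[OF strategy_Act[OF assms], of s]
      by (simp add: sum.distrib sum_distrib_left[symmetric] algebra_simps)
    finally show ?thesis .
  qed (simp add: sum.lessThan_Suc_shift hit_rew_0 hit_rew_Suc del: sum.lessThan_Suc)
qed simp

lemma suminf_hit_rew_step:
  assumes "\<sigma> \<in> strategies P" and "t \<notin> T"
  shows "(\<Sum>n. ennreal (hit_rew P rew T \<sigma> n t)) = (\<Sum>u\<in>UNIV. ennreal (P t (\<sigma> t) u) *
    (ennreal (rew t) * ennreal (reach_real P T \<sigma> u) + (\<Sum>n. ennreal (hit_rew P rew T \<sigma> n u))))"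
proof -
  have step: "ennreal (hit_rew P rew T \<sigma> (Suc n) t) = (\<Sum>u\<in>UNIV. ennreal (P t (\<sigma> t) u) *
      (ennreal (rew t) * ennreal (hit_prob P T \<sigma> n u) + ennreal (hit_rew P rew T \<sigma> n u)))" for n
    using assms(2)
    by (simp add: hit_rew_Suc sum_ennreal[symmetric] ennreal_mult'' ennreal_plus P_nonneg rew_nonneg
        hit_prob_nonneg hit_rew_nonneg del: sum_ennreal)
  have "(\<Sum>n. ennreal (hit_rew P rew T \<sigma> n t)) = (\<Sum>n. ennreal (hit_rew P rew T \<sigma> (Suc n) t))"
    using suminf_offset[of "\<lambda>n. ennreal (hit_rew P rew T \<sigma> n t)" 1] by (simp add: hit_rew_0 summableI)
  also have "\<dots> = (\<Sum>u\<in>UNIV. \<Sum>n. ennreal (P t (\<sigma> t) u) *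
      (ennreal (rew t) * ennreal (hit_prob P T \<sigma> n u) + ennreal (hit_rew P rew T \<sigma> n u)))"
    unfolding step by (intro suminf_sum summableI)
  also have "\<dots> = (\<Sum>u\<in>UNIV. ennreal (P t (\<sigma> t) u) *
      (ennreal (rew t) * ennreal (reach_real P T \<sigma> u) + (\<Sum>n. ennreal (hit_rew P rew T \<sigma> n u))))"
    by (simp add: suminf_add[symmetric, OF summableI summableI] suminf_ennreal_hit_prob[OF assms(1)])
  finally show ?thesis .
qed

lemma exp_rew_ge_step:
  assumes "\<sigma> \<in> strategies P" and "t \<notin> T"
  shows "ennreal (rew t) + (\<Sum>u\<in>UNIV. ennreal (P t (\<sigma> t) u) * exp_rew P rew \<sigma> T u)
    \<le> exp_rew P rew \<sigma> T t"
proof (cases "reach_real P T \<sigma> t < 1")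
  case False
  then have reach_t: "reach_real P T \<sigma> t = 1"
    using reach_real_le_1[OF assms(1)] by (simp add: not_less antisym)
  have reach_succ: "reach_real P T \<sigma> u = 1" if "0 < P t (\<sigma> t) u" for u
    using reach_real_lt_1[OF assms that] reach_t reach_real_le_1[OF assms(1), of u] by fastforce
  have "ennreal (rew t) + (\<Sum>u\<in>UNIV. ennreal (P t (\<sigma> t) u) * exp_rew P rew \<sigma> T u)
      = (\<Sum>u\<in>UNIV. ennreal (P t (\<sigma> t) u) * (ennreal (rew t) + exp_rew P rew \<sigma> T u))"
    by (rule sum_P_ennreal_add[OF assms(1)])
  also have "\<dots> = (\<Sum>u\<in>UNIV. ennreal (P t (\<sigma> t) u) *
      (ennreal (rew t) * ennreal (reach_real P T \<sigma> u) + (\<Sum>n. ennreal (hit_rew P rew T \<sigma> n u))))"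
  proof (intro sum.cong refl)
    fix u
    show "ennreal (P t (\<sigma> t) u) * (ennreal (rew t) + exp_rew P rew \<sigma> T u)
      = ennreal (P t (\<sigma> t) u) *
        (ennreal (rew t) * ennreal (reach_real P T \<sigma> u) + (\<Sum>n. ennreal (hit_rew P rew T \<sigma> n u)))"
      using reach_succ[of u] exp_rew_eq_suminf[OF assms(1), of u]
      by (cases "0 < P t (\<sigma> t) u") (auto simp: ennreal_neg not_less)
  qed
  also have "\<dots> = exp_rew P rew \<sigma> T t"
    by (simp add: suminf_hit_rew_step[OF assms, symmetric] exp_rew_eq_suminf[OF assms(1) reach_t])
  finally show ?thesis by simp
qed (simp add: exp_rew_eq_top[OF assms(1)])

lemma horizon_rew_le_exp_rew:
  assumes "\<sigma> \<in> strategies P"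
  shows "ennreal (horizon_rew P rew T \<sigma> n s) \<le> exp_rew P rew \<sigma> T s"
proof (induction n arbitrary: s)
  case (Suc n)
  show ?case
  proof (cases "s \<in> T")
    case False
    have "ennreal (horizon_rew P rew T \<sigma> (Suc n) s)
        = ennreal (rew s) + (\<Sum>u\<in>UNIV. ennreal (P s (\<sigma> s) u) * ennreal (horizon_rew P rew T \<sigma> n u))"
      using False by (simp add: ennreal_add_sum_P rew_nonneg horizon_rew_nonneg)
    also have "\<dots> \<le> ennreal (rew s) + (\<Sum>u\<in>UNIV. ennreal (P s (\<sigma> s) u) * exp_rew P rew \<sigma> T u)"
      by (intro add_left_mono sum_mono mult_left_mono Suc.IH) simp
    also have "\<dots> \<le> exp_rew P rew \<sigma> T s"
      by (rule exp_rew_ge_step[OF assms False])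
    finally show ?thesis .
  qed simp
qed simp

lemma Emax_op_ge:
  assumes "t \<notin> T" and "a \<in> Act P t"
  shows "ennreal (rew t) + (\<Sum>u\<in>UNIV. ennreal (P t a u) * x u) \<le> Emax_op P rew T x t"
  using assms by (auto simp: Emax_op_def sum_Post[symmetric] intro!: add_left_mono Max_ge)

lemma Emax_op_attained:
  assumes "t \<notin> T"
  obtains a where "a \<in> Act P t"
    and "Emax_op P rew T x t = ennreal (rew t) + (\<Sum>u\<in>UNIV. ennreal (P t a u) * x u)"
proof -
  have "Max ((\<lambda>a. \<Sum>u\<in>Post P t a. ennreal (P t a u) * x u) ` Act P t)
      \<in> (\<lambda>a. \<Sum>u\<in>Post P t a. ennreal (P t a u) * x u) ` Act P t"
    using Act_nonempty by (intro Max_in) auto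
  then obtain a where "a \<in> Act P t"
    and "Max ((\<lambda>a. \<Sum>u\<in>Post P t a. ennreal (P t a u) * x u) ` Act P t)
      = (\<Sum>u\<in>Post P t a. ennreal (P t a u) * x u)"
    by auto
  with assms show ?thesis by (intro that[of a]) (simp_all add: Emax_op_def sum_Post)
qed

lemma greedy_action_exists:
  "\<forall>t. \<exists>a\<in>Act P t. t \<notin> T \<longrightarrow> Emax_op P rew T x t = ennreal (rew t) + (\<Sum>u\<in>UNIV. ennreal (P t a u) * x u)"
proof
  fix t
  show "\<exists>a\<in>Act P t. t \<notin> T \<longrightarrow> Emax_op P rew T x t = ennreal (rew t) + (\<Sum>u\<in>UNIV. ennreal (P t a u) * x u)"
  proof (cases "t \<in> T")
    case False
    then show ?thesis using Emax_op_attained by metis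
  qed (use Act_nonempty in blast)
qed

lemma mono_Emax_tilde_op: "mono (Emax_tilde_op P rew T)"
proof (intro monoI le_funI)
  fix x y :: "'s \<Rightarrow> ennreal" and t
  assume "x \<le> y"
  have "Emax_op P rew T x t \<le> Emax_op P rew T y t" if t: "t \<notin> T"
  proof -
    obtain a where "a \<in> Act P t"
      and a: "Emax_op P rew T x t = ennreal (rew t) + (\<Sum>u\<in>UNIV. ennreal (P t a u) * x u)"
      using Emax_op_attained[OF t] .
    then have "Emax_op P rew T x t \<le> ennreal (rew t) + (\<Sum>u\<in>UNIV. ennreal (P t a u) * y u)"
      using \<open>x \<le> y\<close> by (auto intro!: add_left_mono sum_mono mult_left_mono simp: le_fun_def)
    also have "\<dots> \<le> Emax_op P rew T y t"
      by (rule Emax_op_ge[OF t \<open>a \<in> Act P t\<close>])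
    finally show ?thesis .
  qed
  then show "Emax_tilde_op P rew T x t \<le> Emax_tilde_op P rew T y t"
    by (auto simp: Emax_tilde_op_def Emax_op_def)
qed

lemma prefixed_point_step:
  assumes "Emax_tilde_op P rew T L \<le> L" and "t \<notin> T" and "a \<in> Act P t"
  shows "ennreal (rew t) + (\<Sum>u\<in>UNIV. ennreal (P t a u) * L u) \<le> L t"
  using Emax_op_ge[OF assms(2,3), of L] le_funD[OF assms(1), of t]
  by (cases "0 < min_reach_prob P T t") (auto simp: Emax_tilde_op_def top_unique)

lemma prefixed_point_finite_imp_min_reach_pos:
  assumes "Emax_tilde_op P rew T L \<le> L" and "L t < top"
  shows "0 < min_reach_prob P T t"
proof (rule ccontr)
  assume "\<not> 0 < min_reach_prob P T t"
  then have "L t = top"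
    using le_funD[OF assms(1), of t] by (simp add: Emax_tilde_op_def top_unique)
  then show False using assms(2) by simp
qed

lemma prefixed_point_Act_closed:
  assumes "Emax_tilde_op P rew T L \<le> L"
  shows "Act_closed P T {t. L t < top}"
  unfolding Act_closed_def
proof (intro ballI allI impI)
  fix t a u
  assume t: "t \<in> {t. L t < top} - T" and a: "a \<in> Act P t" and "0 < P t a u"
  have "ennreal (P t a u) * L u \<le> (\<Sum>v\<in>UNIV. ennreal (P t a v) * L v)"
    by (rule member_le_sum) auto
  also have "\<dots> \<le> ennreal (rew t) + (\<Sum>v\<in>UNIV. ennreal (P t a v) * L v)"
    by (rule add_increasing) simp_all
  also have "\<dots> \<le> L t"
    using prefixed_point_step[OF assms _ a] t by simp
  also have "\<dots> < top"
    using t by simp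
  finally show "u \<in> {t. L t < top}"
    using \<open>0 < P t a u\<close> by (auto simp: ennreal_mult_less_top top.not_eq_extremum)
qed

lemma horizon_rew_le_prefixed_point:
  assumes "\<sigma> \<in> strategies P" and "Emax_tilde_op P rew T L \<le> L"
  shows "ennreal (horizon_rew P rew T \<sigma> n t) \<le> L t"
proof (induction n arbitrary: t)
  case (Suc n)
  show ?case
  proof (cases "t \<in> T")
    case False
    have "ennreal (horizon_rew P rew T \<sigma> (Suc n) t)
        = ennreal (rew t) + (\<Sum>u\<in>UNIV. ennreal (P t (\<sigma> t) u) * ennreal (horizon_rew P rew T \<sigma> n u))"
      using False by (simp add: ennreal_add_sum_P rew_nonneg horizon_rew_nonneg)
    also have "\<dots> \<le> ennreal (rew t) + (\<Sum>u\<in>UNIV. ennreal (P t (\<sigma> t) u) * L u)"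
      by (intro add_left_mono sum_mono mult_left_mono Suc.IH) simp
    also have "\<dots> \<le> L t"
      by (rule prefixed_point_step[OF assms(2) False strategy_Act[OF assms(1)]])
    finally show ?thesis .
  qed simp
qed simp

lemma exp_rew_le_prefixed_point:
  assumes "\<sigma> \<in> strategies P" and "Emax_tilde_op P rew T L \<le> L"
  shows "exp_rew P rew \<sigma> T s \<le> L s"
proof (cases "L s < top")
  case True
  have "reach_real P T \<sigma> s = 1"
    by (rule reach_real_eq_1_Act_closed[OF prefixed_point_Act_closed[OF assms(2)] _ assms(1)])
      (use prefixed_point_finite_imp_min_reach_pos[OF assms(2)] True in auto)
  then have "exp_rew P rew \<sigma> T s = (SUP n. \<Sum>k<n. ennreal (hit_rew P rew T \<sigma> k s))"
    by (simp add: exp_rew_eq_suminf[OF assms(1)] suminf_eq_SUP)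
  also have "\<dots> \<le> L s"
  proof (rule SUP_least)
    fix n
    have "(\<Sum>k<n. ennreal (hit_rew P rew T \<sigma> k s)) \<le> ennreal (horizon_rew P rew T \<sigma> n s)"
      using sum_hit_rew_le_horizon_rew[OF assms(1)] by (simp add: hit_rew_nonneg ennreal_leI)
    also have "\<dots> \<le> L s"
      by (rule horizon_rew_le_prefixed_point[OF assms])
    finally show "(\<Sum>k<n. ennreal (hit_rew P rew T \<sigma> k s)) \<le> L s" .
  qed
  finally show ?thesis .
qed (simp add: less_top[symmetric])

lemma subsolution_le_horizon_rew:
  assumes "\<sigma> \<in> strategies P" and "closed_under P T \<sigma> U" and "0 \<le> B"
    and "\<And>t. t \<in> U \<Longrightarrow> X t \<le> ennreal B"
    and "\<And>t. t \<in> U \<Longrightarrow> t \<in> T \<Longrightarrow> X t = 0"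
    and "\<And>t. t \<in> U \<Longrightarrow> t \<notin> T \<Longrightarrow> X t \<le> ennreal (rew t) + (\<Sum>u\<in>UNIV. ennreal (P t (\<sigma> t) u) * X u)"
    and "s \<in> U"
  shows "X s \<le> ennreal (horizon_rew P rew T \<sigma> n s + B * avoid_prob P T \<sigma> n s)"
  using assms(7)
proof (induction n arbitrary: s)
  case 0
  then show ?case using assms(4) by simp
next
  case (Suc n)
  define g where "g u = horizon_rew P rew T \<sigma> n u + B * avoid_prob P T \<sigma> n u" for u
  have g_nonneg: "0 \<le> g u" for u
    unfolding g_def using assms(3) by (intro add_nonneg_nonneg mult_nonneg_nonneg horizon_rew_nonneg avoid_prob_nonneg)
  show ?case
  proof (cases "s \<in> T")
    case False
    have "ennreal (P s (\<sigma> s) u) * X u \<le> ennreal (P s (\<sigma> s) u) * ennreal (g u)" for u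
      using Suc.IH[unfolded g_def[symmetric]] closed_underD[OF assms(2) Suc.prems False, of u]
      by (cases "0 < P s (\<sigma> s) u") (auto intro: mult_left_mono simp: ennreal_neg not_less)
    then have "X s \<le> ennreal (rew s) + (\<Sum>u\<in>UNIV. ennreal (P s (\<sigma> s) u) * ennreal (g u))"
      using assms(6)[OF Suc.prems False] by (meson add_left_mono order_trans sum_mono)
    also have "\<dots> = ennreal (rew s + (\<Sum>u\<in>UNIV. P s (\<sigma> s) u * g u))"
      by (rule ennreal_add_sum_P[symmetric, OF rew_nonneg g_nonneg])
    also have "rew s + (\<Sum>u\<in>UNIV. P s (\<sigma> s) u * g u)
        = horizon_rew P rew T \<sigma> (Suc n) s + B * avoid_prob P T \<sigma> (Suc n) s"
      using False by (simp add: g_def algebra_simps sum.distrib sum_distrib_left)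
    finally show ?thesis .
  qed (use assms(5) Suc.prems in simp)
qed

lemma subsolution_le_exp_rew:
  assumes "\<sigma> \<in> strategies P" and "closed_under P T \<sigma> U" and "0 \<le> B"
    and "\<And>t. t \<in> U \<Longrightarrow> X t \<le> ennreal B"
    and "\<And>t. t \<in> U \<Longrightarrow> t \<in> T \<Longrightarrow> X t = 0"
    and "\<And>t. t \<in> U \<Longrightarrow> t \<notin> T \<Longrightarrow> X t \<le> ennreal (rew t) + (\<Sum>u\<in>UNIV. ennreal (P t (\<sigma> t) u) * X u)"
    and "s \<in> U" and "reach_real P T \<sigma> s = 1"
  shows "X s \<le> exp_rew P rew \<sigma> T s"
proof (rule ennreal_le_epsilon)
  fix e :: real
  assume "0 < e"
  have "(\<lambda>n. B * avoid_prob P T \<sigma> n s) \<longlonglongrightarrow> B * 0"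
    using avoid_prob_tendsto[OF assms(1), of s] assms(8) by (intro tendsto_mult_left) simp
  then have "\<forall>\<^sub>F n in sequentially. B * avoid_prob P T \<sigma> n s < e"
    using \<open>0 < e\<close> by (auto dest: order_tendstoD(2))
  then obtain n where n: "B * avoid_prob P T \<sigma> n s < e"
    by (auto simp: eventually_sequentially)
  have "X s \<le> ennreal (horizon_rew P rew T \<sigma> n s + B * avoid_prob P T \<sigma> n s)"
    by (rule subsolution_le_horizon_rew[OF assms(1-7)])
  also have "\<dots> = ennreal (horizon_rew P rew T \<sigma> n s) + ennreal (B * avoid_prob P T \<sigma> n s)"
    using assms(3) by (intro ennreal_plus horizon_rew_nonneg mult_nonneg_nonneg avoid_prob_nonneg)
  also have "\<dots> \<le> exp_rew P rew \<sigma> T s + ennreal e"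
    using n by (intro add_mono horizon_rew_le_exp_rew[OF assms(1)] ennreal_leI) simp
  finally show "X s \<le> exp_rew P rew \<sigma> T s + ennreal e" .
qed

lemma lfp_Emax_tilde_op_le_supersolution:
  assumes "Act_closed P T U" and "\<And>t. t \<in> U \<Longrightarrow> 0 < min_reach_prob P T t"
    and "\<And>t. 0 \<le> w t"
    and "\<And>t a. t \<in> U \<Longrightarrow> t \<notin> T \<Longrightarrow> a \<in> Act P t \<Longrightarrow> rew t + (\<Sum>u\<in>UNIV. P t a u * w u) \<le> w t"
    and "s \<in> U"
  shows "lfp (Emax_tilde_op P rew T) s \<le> ennreal (w s)"
proof -
  define W where "W t = (if t \<in> U then ennreal (w t) else top)" for t
  have "Emax_tilde_op P rew T W t \<le> W t" for t
  proof (cases "t \<in> U \<and> t \<notin> T")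
    case True
    then obtain a where a: "a \<in> Act P t"
      and Emax_eq: "Emax_op P rew T W t = ennreal (rew t) + (\<Sum>u\<in>UNIV. ennreal (P t a u) * W u)"
      using Emax_op_attained by blast
    note Emax_eq
    also have "(\<Sum>u\<in>UNIV. ennreal (P t a u) * W u) = (\<Sum>u\<in>UNIV. ennreal (P t a u) * ennreal (w u))"
    proof (intro sum.cong refl)
      fix u
      show "ennreal (P t a u) * W u = ennreal (P t a u) * ennreal (w u)"
        using True a assms(1) by (cases "0 < P t a u") (auto simp: W_def Act_closed_def ennreal_neg)
    qed
    also have "ennreal (rew t) + \<dots> = ennreal (rew t + (\<Sum>u\<in>UNIV. P t a u * w u))"
      by (rule ennreal_add_sum_P[symmetric, OF rew_nonneg assms(3)])
    also have "\<dots> \<le> ennreal (w t)"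
      using assms(4)[OF _ _ a] True by (intro ennreal_leI) simp
    finally have "Emax_op P rew T W t \<le> ennreal (w t)" .
    moreover have "W t = ennreal (w t)"
      using True by (simp add: W_def)
    ultimately show ?thesis
      using True assms(2) by (simp add: Emax_tilde_op_def)
  qed (use assms(2) in \<open>auto simp: Emax_tilde_op_def Emax_op_def W_def\<close>)
  then have "lfp (Emax_tilde_op P rew T) \<le> W"
    by (intro lfp_lowerbound le_funI)
  then show ?thesis
    using assms(5) by (auto simp: W_def dest: le_funD[of _ _ s])
qed

lemma lfp_Emax_tilde_op_bounded:
  assumes "Act_closed P T U" and "\<And>t. t \<in> U \<Longrightarrow> 0 < min_reach_prob P T t"
  obtains B where "0 \<le> B" and "\<And>t. t \<in> U \<Longrightarrow> lfp (Emax_tilde_op P rew T) t \<le> ennreal B"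
proof -
  obtain N where N: "\<And>t. t \<in> U \<Longrightarrow> max_avoid_prob P T N t \<le> 1/2"
    using max_avoid_prob_le_half[OF assms] by blast
  define c where "c = Max (range rew)"
  have rew_le_c: "rew t \<le> c" for t
    unfolding c_def by simp
  have "0 \<le> c"
    using rew_nonneg rew_le_c order_trans by blast
  define w where "w t = 2 * c * (\<Sum>k<N. max_avoid_prob P T k t)" for t
  have "lfp (Emax_tilde_op P rew T) t \<le> ennreal (w t)" if "t \<in> U" for t
  proof (rule lfp_Emax_tilde_op_le_supersolution[OF assms _ _ that])
    show "0 \<le> w t" for t
      unfolding w_def using \<open>0 \<le> c\<close> by (intro mult_nonneg_nonneg sum_nonneg max_avoid_prob_nonneg) simp_all
    show "rew t + (\<Sum>u\<in>UNIV. P t a u * w u) \<le> w t" if "t \<in> U" "t \<notin> T" "a \<in> Act P t" for t a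
      using max_avoid_potential_step[OF that(2,3) N[OF that(1)] \<open>0 \<le> c\<close>] rew_le_c[of t]
      unfolding w_def by linarith
  qed
  moreover have "w t \<le> 2 * c * N" for t
    unfolding w_def using \<open>0 \<le> c\<close> sum_bounded_above[of "{..<N}" "\<lambda>k. max_avoid_prob P T k t" 1]
    by (intro mult_left_mono) (auto simp: max_avoid_prob_le_1)
  ultimately have "lfp (Emax_tilde_op P rew T) t \<le> ennreal (2 * c * N)" if "t \<in> U" for t
    using that by (meson ennreal_leI order.trans)
  with \<open>0 \<le> c\<close> show ?thesis
    by (intro that[of "2 * c * N"]) simp_all
qed

lemma lfp_Emax_tilde_op_le_exp_rew:
  "\<exists>\<sigma>\<in>strategies P. \<forall>s. lfp (Emax_tilde_op P rew T) s \<le> exp_rew P rew \<sigma> T s"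
proof -
  define L where "L = lfp (Emax_tilde_op P rew T)"
  from strategy_can_avoid[OF greedy_action_exists] obtain \<sigma> where \<sigma>: "\<sigma> \<in> strategies P"
    and avoid: "\<And>t. t \<in> can_avoid \<Longrightarrow> reach_real P T \<sigma> t < 1"
    and greedy: "\<And>t. t \<notin> can_avoid \<Longrightarrow> t \<notin> T
      \<Longrightarrow> Emax_op P rew T L t = ennreal (rew t) + (\<Sum>u\<in>UNIV. ennreal (P t (\<sigma> t) u) * L u)"
    by blast
  have closed: "closed_under P T \<sigma> (- can_avoid)"
    by (rule Act_closed_imp_closed_under[OF Act_closed_Compl_can_avoid \<sigma>])
  have pos: "0 < min_reach_prob P T t" if "t \<in> - can_avoid" for t
    using that by (simp add: min_reach_prob_pos_if_not_can_avoid)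
  obtain B where "0 \<le> B" and B: "\<And>t. t \<in> - can_avoid \<Longrightarrow> L t \<le> ennreal B"
    using lfp_Emax_tilde_op_bounded[OF Act_closed_Compl_can_avoid pos, folded L_def] by metis
  have L_eq: "L t = Emax_op P rew T L t" if "t \<in> - can_avoid" for t
    using fun_cong[OF lfp_fixpoint[OF mono_Emax_tilde_op], of t] pos[OF that]
    by (simp add: L_def Emax_tilde_op_def)
  have "L s \<le> exp_rew P rew \<sigma> T s" for s
  proof (cases "s \<in> can_avoid")
    case True
    then show ?thesis
      by (simp add: exp_rew_eq_top[OF \<sigma> avoid])
  next
    case False
    then have outside: "s \<in> - can_avoid"
      by simp
    show ?thesis
    proof (rule subsolution_le_exp_rew[OF \<sigma> closed \<open>0 \<le> B\<close> B _ _ outside])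
      show "L t = 0" if "t \<in> - can_avoid" and "t \<in> T" for t
        using L_eq[OF that(1)] that(2) by (simp add: Emax_op_def)
      show "L t \<le> ennreal (rew t) + (\<Sum>u\<in>UNIV. ennreal (P t (\<sigma> t) u) * L u)"
        if "t \<in> - can_avoid" and "t \<notin> T" for t
        using L_eq[OF that(1)] greedy that by simp
      show "reach_real P T \<sigma> s = 1"
        by (rule reach_real_eq_1_Act_closed[OF Act_closed_Compl_can_avoid pos \<sigma> outside])
    qed
  qed
  with \<sigma> show ?thesis
    unfolding L_def by blast
qed

end

theorem lemma7:
  fixes P :: "'s::finite \<Rightarrow> 'a::finite \<Rightarrow> 's \<Rightarrow> real"
    and T :: "'s set" and rew :: "'s \<Rightarrow> real"
  assumes "is_mdp P"
    and "\<forall>s. rew s \<ge> 0"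
  shows "\<forall>s. lfp (Emax_tilde_op P rew T) s = max_exp_rew P rew T s"
proof
  fix s
  interpret reward_mdp P T rew
    using assms by unfold_locales auto
  let ?L = "lfp (Emax_tilde_op P rew T)"
  let ?E = "(\<lambda>\<sigma>. exp_rew P rew \<sigma> T s) ` strategies P"
  have finite: "finite ?E" and nonempty: "?E \<noteq> {}"
    using finite_strategies strategies_nonempty by auto
  obtain \<sigma> where "\<sigma> \<in> strategies P" and L_le: "?L s \<le> exp_rew P rew \<sigma> T s"
    using lfp_Emax_tilde_op_le_exp_rew by blast
  then have "?L s \<le> Max ?E"
    using finite by (intro order_trans[OF L_le] Max_ge) auto
  moreover have "Max ?E \<le> ?L s"
    using lfp_fixpoint[OF mono_Emax_tilde_op] finite nonempty
    by (auto intro!: exp_rew_le_prefixed_point)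
  ultimately show "?L s = max_exp_rew P rew T s"
    unfolding max_exp_rew_def by (rule antisym)
qed

end
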